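(* Let $N=2^L$ ($L\ge1$), channel numbers $r_0,\dots,r_{L-1}\ge1$, an output index $y$, and pairwise distinct covering templates $\mathbf x^{(1)},\dots,\mathbf x^{(M)}\in\mathbb R^s$ be given. Suppose all parameters of the deep ConvNet with ReLU activation and max pooling (the representation parameters $\theta_1,\dots,\theta_M\in\Theta$ and all linear weights $\mathbf a^{l,j,\gamma}$) are drawn from a distribution having a continuous probability density function that vanishes nowhere. Then with positive probability the resulting score function $h^D_y$ can be realized by a shallow ConvNet with ReLU activation and max pooling having a single hidden channel ($Z=1$), i.e. there exist $f_{\tilde\theta_1},\dots,f_{\tilde\theta_M}\in\mathcal F$ and weights for this shallow ConvNet with $\mathcal A(h^S_y)=\mathcal A(h^D_y)$.
   Context: Inputs are $X=(\mathbf x_1,\dots,\mathbf x_N)\in(\mathbb R^s)^N$. Representation functions are taken from a parametric family $\mathcal F=\{f_\theta:\mathbb R^s\to\mathbb R:\theta\in\Theta\}$, $\Theta$ an open subset of a Euclidean space, assumed throughout to satisfy: (continuity) $f_\theta(\mathbf x)$ is continuous in $\theta$ and $\mathbf x$; (non-degeneracy) for any pairwise distinct $\mathbf x^{(1)},\dots,\mathbf x^{(M)}$ there exist $f_{\theta_1},\dots,f_{\theta_M}\in\mathcal F$ with $F=(f_{\theta_d}(\mathbf x^{(i)}))_{i,d}$ non-singular. ReLU activation with max pooling: $\sigma(z)=\max\{0,z\}$, $P=\max$. Shallow ConvNet with $Z$ hidden channels: $h^S_y(X)=\sum_{z=1}^Z a^y_z\,P_{i\in[N]}\big(\sigma(\sum_{d=1}^M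 a^{z,i}_d f_{\theta_d}(\mathbf x_i))\big)$ with $f_{\theta_d}\in\mathcal F$, $\mathbf a^{z,i}\in\mathbb R^M$, $\mathbf a^y\in\mathbb R^Z$. Deep ConvNet: with $f_{\theta_d}\in\mathcal F$, $\mathbf a^{0,j,\gamma}\in\mathbb R^M$ ($j\in[N],\gamma\in[r_0]$), $\mathbf a^{l,j,\gamma}\in\mathbb R^{r_{l-1}}$ ($l\in[L-1]$, $j\in[N/2^l]$, $\gamma\in[r_l]$), $\mathbf a^{L,1,y}\in\mathbb R^{r_{L-1}}$: $u^0_{j,\gamma}=\sigma(\sum_d a^{0,j,\gamma}_d f_{\theta_d}(\mathbf x_j))$; for $l=0,\dots,L-1$, $v^l_{j,\gamma}=P(u^l_{2j-1,\gamma},u^l_{2j,\gamma})$ ($j\in[N/2^{l+1}]$), for $l\ge1$, $u^l_{j,\gamma}=\sigma(\sum_\alpha a^{l,j,\gamma}_\alpha v^{l-1}_{j,\alpha})$ ($j\in[N/2^l]$); $h^D_y(X)=\sum_\alpha a^{L,1,y}_\alpha v^{L-1}_{1,\alpha}$. Grid tensor w.r.t. templates $\mathbf x^{(1)},\dots,\mathbf x^{(M)}$: $\mathcal A(h)_{d_1,\dots,d_N}=h(\mathbf x^{(d_1)},\dots,\mathbf x^{(d_N)})$. Templates are covering if score functions are identified whenever their grid tensors coincide (so equal grid tensors means one network realizes the other's score function). *)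

theory Defs
  imports "HOL-Probability.Probability" "Jordan_Normal_Form.Determinant"
begin

definition relu :: "real \<Rightarrow> real" where
  "relu z = max 0 z"

definition nondegenerate_family ::
  "('p \<Rightarrow> 'x \<Rightarrow> real) \<Rightarrow> 'p set \<Rightarrow> bool" where
  "nondegenerate_family f Theta \<longleftrightarrow>
     (\<forall>(K::nat) (xs::nat \<Rightarrow> 'x). inj_on xs {1..K} \<longrightarrow>
        (\<exists>th::nat \<Rightarrow> 'p. (\<forall>d\<in>{1..K}. th d \<in> Theta) \<and>
           det (Matrix.mat K K (\<lambda>(i, d). f (th (d + 1)) (xs (i + 1)))) \<noteq> 0))"

text \<open>Weights a(l, j, gamma, alpha) = a^{l,j,gamma}_alpha;
  th d = theta_d; X i = x_i (i in 1..N).  deep_u l j gamma = u^l_{j,gamma}; the pooled value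
  v^l_{j,gamma} = max (u^l_{2j-1,gamma}) (u^l_{2j,gamma}) is inlined.\<close>
fun deep_u ::
  "('p \<Rightarrow> 'x \<Rightarrow> real) \<Rightarrow> nat \<Rightarrow> (nat \<Rightarrow> nat) \<Rightarrow> (nat \<Rightarrow> 'p) \<Rightarrow>
   (nat \<times> nat \<times> nat \<times> nat \<Rightarrow> real) \<Rightarrow> (nat \<Rightarrow> 'x) \<Rightarrow> nat \<Rightarrow> nat \<Rightarrow> nat \<Rightarrow> real" where
  "deep_u f M r th a X 0 j g =
     relu (\<Sum>d = 1..M. a (0, j, g, d) * f (th d) (X j))"
| "deep_u f M r th a X (Suc l) j g =
     relu (\<Sum>al = 1..r l. a (Suc l, j, g, al) *
             max (deep_u f M r th a X l (2*j - 1) al) (deep_u f M r th a X l (2*j) al))"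

definition deep_score ::
  "('p \<Rightarrow> 'x \<Rightarrow> real) \<Rightarrow> nat \<Rightarrow> nat \<Rightarrow> (nat \<Rightarrow> nat) \<Rightarrow> nat \<Rightarrow> (nat \<Rightarrow> 'p) \<Rightarrow>
   (nat \<times> nat \<times> nat \<times> nat \<Rightarrow> real) \<Rightarrow> (nat \<Rightarrow> 'x) \<Rightarrow> real" where
  "deep_score f M L r y th a X =
     (\<Sum>al = 1..r (L - 1). a (L, 1, y, al) *
        max (deep_u f M r th a X (L - 1) 1 al) (deep_u f M r th a X (L - 1) 2 al))"

definition deep_weight_index :: "nat \<Rightarrow> nat \<Rightarrow> nat \<Rightarrow> (nat \<Rightarrow> nat) \<Rightarrow> nat \<Rightarrow> (nat \<times> nat \<times> nat \<times> nat) set" where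
  "deep_weight_index M N L r y =
     {(0, j, g, d) | j g d. j \<in> {1..N} \<and> g \<in> {1..r 0} \<and> d \<in> {1..M}}
   \<union> {(l, j, g, al) | l j g al. l \<in> {1..L-1} \<and> j \<in> {1..N div 2^l} \<and> g \<in> {1..r l} \<and> al \<in> {1..r (l-1)}}
   \<union> {(L, 1, y, al) | al. al \<in> {1..r (L-1)}}"

text \<open>Shallow ConvNet with ReLU, max pooling and a single hidden channel (Z = 1):
  h^S_y(X) = b * max_{i in [N]} relu (sum_d c(i,d) f(th d)(x_i)),  b = a^y_1, c(i,d) = a^{1,i}_d.\<close>
definition shallow1_score ::
  "('p \<Rightarrow> 'x \<Rightarrow> real) \<Rightarrow> nat \<Rightarrow> nat \<Rightarrow> (nat \<Rightarrow> 'p) \<Rightarrow> real \<Rightarrow> (nat \<Rightarrow> nat \<Rightarrow> real) \<Rightarrow>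
   (nat \<Rightarrow> 'x) \<Rightarrow> real" where
  "shallow1_score f M N th b c X =
     b * Max ((\<lambda>i. relu (\<Sum>d = 1..M. c i d * f (th d) (X i))) ` {1..N})"

text \<open>Grid tensor of a score function h w.r.t. templates x(1..M):
  A(h)_{d_1..d_N} = h(x(d_1),...,x(d_N)), as a function on {1..N} -> {1..M}.\<close>
definition grid_tensor :: "(nat \<Rightarrow> 'x) \<Rightarrow> nat \<Rightarrow> nat \<Rightarrow> ((nat \<Rightarrow> 'x) \<Rightarrow> real) \<Rightarrow> (nat \<Rightarrow> nat) \<Rightarrow> real" where
  "grid_tensor x M N h = restrict (\<lambda>dd. h (\<lambda>i. x (dd i))) (PiE {1..N} (\<lambda>_. {1..M}))"

definition deep_param_measure ::
  "nat \<Rightarrow> (nat \<times> nat \<times> nat \<times> nat) set \<Rightarrow> ((nat \<Rightarrow> 'p::euclidean_space) \<times> (nat \<times> nat \<times> nat \<times> nat \<Rightarrow> real)) measure" where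
  "deep_param_measure M W = (PiM {1..M} (\<lambda>_. lborel)) \<Otimes>\<^sub>M (PiM W (\<lambda>_. lborel))"

end

theory Submission
  imports Defs
begin

text \<open>By non-degeneracy there are representation parameters for which the matrix of values
  at the templates is invertible, so first-layer weights can be chosen making every first-layer
  pre-activation at every template equal to \<open>-1\<close>.  By continuity the pre-activations stay negative
  on an open box of parameters around this point, with all deeper weights arbitrary; the box has
  positive Lebesgue measure and hence positive probability.  On it every first-layer ReLU is dead at
  every grid point, so all deeper units vanish and the grid tensor of the deep score function is
  zero, which the shallow network with output weight \<open>0\<close> realizes.\<close>

lemma det_nonzero_imp_solvable:
  fixes F :: "nat \<Rightarrow> nat \<Rightarrow> 'a::field"
  assumes "det (Matrix.mat n n (\<lambda>(i, d). F i d)) \<noteq> 0"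
  shows "\<exists>v. \<forall>i<n. (\<Sum>d<n. F i d * v d) = b i"
proof -
  let ?A = "Matrix.mat n n (\<lambda>(i, d). F i d)"
  have A: "?A \<in> carrier_mat n n" by simp
  obtain B where AB: "?A * B = 1\<^sub>m n" and B: "B \<in> carrier_mat n n"
    using det_non_zero_imp_unit[OF A assms, of "()"] unfolding Units_def ring_mat_def by auto
  define v where "v = B *\<^sub>v vec n b"
  have "?A *\<^sub>v v = (?A * B) *\<^sub>v vec n b"
    unfolding v_def by (rule assoc_mult_mat_vec[symmetric, OF A B]) simp
  also have "\<dots> = vec n b"
    unfolding AB by simp
  finally have "?A *\<^sub>v v = vec n b" .
  then have "(?A *\<^sub>v v) $ i = b i" if "i < n" for i
    using that by simp
  moreover have "dim_vec v = n" unfolding v_def using B by simp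
  ultimately show ?thesis
    by (intro exI[of _ "vec_index v"])
      (auto simp: scalar_prod_def row_def atLeast0LessThan mult.commute)
qed

lemma nondegenerate_family_interpolates:
  fixes M :: nat
  assumes "nondegenerate_family f Theta" and "inj_on x {1..M}"
  obtains th where "\<forall>d\<in>{1..M}. th d \<in> Theta"
    and "\<And>b. \<exists>c. \<forall>i\<in>{1..M}. (\<Sum>d = 1..M. c d * f (th d) (x i)) = b i"
proof -
  obtain th where th: "\<forall>d\<in>{1..M}. th d \<in> Theta"
    and det: "det (Matrix.mat M M (\<lambda>(i, d). f (th (d + 1)) (x (i + 1)))) \<noteq> 0"
    using assms unfolding nondegenerate_family_def by blast
  have "\<exists>c. \<forall>i\<in>{1..M}. (\<Sum>d = 1..M. c d * f (th d) (x i)) = b i" for b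
  proof -
    obtain v where v: "\<forall>i<M. (\<Sum>d<M. f (th (d + 1)) (x (i + 1)) * v d) = b (i + 1)"
      using det_nonzero_imp_solvable[OF det, where b = "\<lambda>i. b (i + 1)"] by blast
    have "(\<Sum>d = 1..M. v (d - 1) * f (th d) (x i)) = b i" if "i \<in> {1..M}" for i
    proof -
      obtain i' where i': "i = Suc i'" "i' < M"
        using \<open>i \<in> {1..M}\<close> by (cases i) auto
      have "(\<Sum>d = 1..M. v (d - 1) * f (th d) (x i)) = (\<Sum>d<M. f (th (d + 1)) (x (i' + 1)) * v d)"
        using i'(1) by (simp add: sum.atLeast1_atMost_eq mult.commute)
      also have "\<dots> = b i"
        using v[rule_format, OF i'(2)] i'(1) by simp
      finally show ?thesis .
    qed
    then show ?thesis
      by (intro exI[of _ "\<lambda>d. v (d - 1)"]) blast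
  qed
  with th show thesis
    by (rule that)
qed

lemma isCont_of_continuous_on_open_Times:
  fixes f :: "'a::metric_space \<Rightarrow> 'b::metric_space \<Rightarrow> 'c::topological_space"
  assumes "open S" and "continuous_on (S \<times> UNIV) (\<lambda>(s, v). f s v)" and "s \<in> S"
  shows "isCont (\<lambda>s. f s v) s"
proof -
  have "isCont (\<lambda>(s, v). f s v) (s, v)"
    using assms by (simp add: continuous_on_eq_continuous_at open_Times)
  from isCont_o2[OF continuous_Pair[OF continuous_ident continuous_const] this] show ?thesis
    by simp
qed

lemma eventually_nhds_imp_open_Times:
  assumes "eventually P (nhds (a, b))"
  obtains U V where "open U" "a \<in> U" "open V" "b \<in> V" "\<And>u v. u \<in> U \<Longrightarrow> v \<in> V \<Longrightarrow> P (u, v)"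
proof -
  obtain S where S: "open S" "(a, b) \<in> S" "\<forall>z\<in>S. P z"
    using assms unfolding eventually_nhds by blast
  obtain U V where "open U" "open V" "(a, b) \<in> U \<times> V" "U \<times> V \<subseteq> S"
    by (rule open_prod_elim[OF S(1,2)])
  with S(3) show thesis
    using that by blast
qed

lemma weighted_sums_neg_near:
  fixes g :: "'i \<Rightarrow> 'a::metric_space \<Rightarrow> 'k \<Rightarrow> real"
  assumes I: "finite I" and K: "finite K"
    and cont: "\<And>d k. d \<in> I \<Longrightarrow> k \<in> K \<Longrightarrow> isCont (\<lambda>s. g d s k) (t d)"
    and neg: "\<And>k. k \<in> K \<Longrightarrow> (\<Sum>d\<in>I. c d * g d (t d) k) < 0"
  obtains U V where "\<And>d. d \<in> I \<Longrightarrow> open (U d) \<and> t d \<in> U d \<and> open (V d) \<and> c d \<in> V d"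
    and "\<And>u w k. \<forall>d\<in>I. u d \<in> U d \<and> w d \<in> V d \<Longrightarrow> k \<in> K \<Longrightarrow> (\<Sum>d\<in>I. w d * g d (u d) k) < 0"
proof -
  \<comment> \<open>if each of the \<open>card I\<close> terms moves by less than \<open>e k\<close>, the sum stays below a
    \<open>1 / (card I + 1)\<close> fraction of its negative value\<close>
  define e where "e k = - (\<Sum>d\<in>I. c d * g d (t d) k) / (card I + 1)" for k
  have e_pos: "e k > 0" if "k \<in> K" for k
    using neg[OF that] by (simp add: e_def divide_neg_pos)
  define near where "near d U V \<longleftrightarrow> open U \<and> t d \<in> U \<and> open V \<and> c d \<in> V \<and>
      (\<forall>s\<in>U. \<forall>v\<in>V. \<forall>k\<in>K. \<bar>v * g d s k - c d * g d (t d) k\<bar> < e k)" for d U V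
  have "\<exists>U V. near d U V" if d: "d \<in> I" for d
  proof -
    define h where "h k = (\<lambda>z. snd z * g d (fst z) k)" for k
    have "isCont (h k) (t d, c d)" if "k \<in> K" for k
    proof -
      have "isCont fst (t d, c d)"
        by (rule continuous_fst[OF continuous_ident])
      then have "isCont (\<lambda>z. g d (fst z) k) (t d, c d)"
        using isCont_o2 cont[OF d that] by fastforce
      then show ?thesis
        unfolding h_def by (intro continuous_mult continuous_snd continuous_ident)
    qed
    then have "(h k \<longlongrightarrow> h k (t d, c d)) (nhds (t d, c d))" if "k \<in> K" for k
      using that by (simp add: isCont_def tendsto_at_iff_tendsto_nhds)
    then have "\<forall>k\<in>K. eventually (\<lambda>z. \<bar>snd z * g d (fst z) k - c d * g d (t d) k\<bar> < e k) (nhds (t d, c d))"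
      using e_pos by (auto simp: tendsto_iff dist_real_def h_def)
    then have "eventually (\<lambda>z. \<forall>k\<in>K. \<bar>snd z * g d (fst z) k - c d * g d (t d) k\<bar> < e k) (nhds (t d, c d))"
      using K by (simp add: eventually_ball_finite)
    then obtain U V where "open U" "t d \<in> U" "open V" "c d \<in> V"
      and "\<And>s v. s \<in> U \<Longrightarrow> v \<in> V \<Longrightarrow> \<forall>k\<in>K. \<bar>v * g d s k - c d * g d (t d) k\<bar> < e k"
      by (rule eventually_nhds_imp_open_Times) auto
    then show ?thesis unfolding near_def by blast
  qed
  then obtain U V where UV: "\<And>d. d \<in> I \<Longrightarrow> near d (U d) (V d)"
    by metis
  show thesis
  proof (rule that)
    fix u w k assume uw: "\<forall>d\<in>I. u d \<in> U d \<and> w d \<in> V d" and k: "k \<in> K"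
    have "(\<Sum>d\<in>I. w d * g d (u d) k) - (\<Sum>d\<in>I. c d * g d (t d) k)
        \<le> (\<Sum>d\<in>I. \<bar>w d * g d (u d) k - c d * g d (t d) k\<bar>)"
      by (simp add: sum_subtractf[symmetric] sum_mono)
    also have "\<dots> \<le> (\<Sum>d\<in>I. e k)"
    proof (rule sum_mono)
      fix d assume "d \<in> I"
      then have "near d (U d) (V d)" "u d \<in> U d" "w d \<in> V d"
        using UV uw by auto
      then show "\<bar>w d * g d (u d) k - c d * g d (t d) k\<bar> \<le> e k"
        using k unfolding near_def by (blast intro: less_imp_le)
    qed
    also have "\<dots> = card I * e k" by simp
    finally have "(\<Sum>d\<in>I. w d * g d (u d) k) \<le> (\<Sum>d\<in>I. c d * g d (t d) k) / (card I + 1)"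
      by (simp add: e_def field_simps)
    also have "\<dots> < 0"
      using neg[OF k] by (simp add: divide_neg_pos)
    finally show "(\<Sum>d\<in>I. w d * g d (u d) k) < 0" .
  next
    show "\<And>d. d \<in> I \<Longrightarrow> open (U d) \<and> t d \<in> U d \<and> open (V d) \<and> c d \<in> V d"
      using UV unfolding near_def by blast
  qed
qed

lemma nondegenerate_family_negative_preactivation_boxes:
  fixes f :: "'p::metric_space \<Rightarrow> 'x::metric_space \<Rightarrow> real" and M :: nat
  assumes Theta_open: "open Theta" and f_cont: "continuous_on (Theta \<times> UNIV) (\<lambda>(th, v). f th v)"
    and "nondegenerate_family f Theta" and "inj_on x {1..M}"
  obtains U V where "\<And>d. d \<in> {1..M} \<Longrightarrow> open (U d) \<and> U d \<noteq> {} \<and> U d \<subseteq> Theta \<and> open (V d) \<and> V d \<noteq> {}"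
    and "\<And>t w i. \<forall>d\<in>{1..M}. t d \<in> U d \<and> w d \<in> V d \<Longrightarrow> i \<in> {1..M} \<Longrightarrow>
      (\<Sum>d = 1..M. w d * f (t d) (x i)) < 0"
proof -
  obtain th0 where th0: "\<forall>d\<in>{1..M}. th0 d \<in> Theta"
    and interpolate: "\<And>b. \<exists>c. \<forall>i\<in>{1..M}. (\<Sum>d = 1..M. c d * f (th0 d) (x i)) = b i"
    using nondegenerate_family_interpolates[OF assms(3,4)] by blast
  obtain c where c: "\<forall>i\<in>{1..M}. (\<Sum>d = 1..M. c d * f (th0 d) (x i)) = -1"
    using interpolate[of "\<lambda>_. -1"] by blast
  obtain U V where UV: "\<And>d. d \<in> {1..M} \<Longrightarrow> open (U d) \<and> th0 d \<in> U d \<and> open (V d) \<and> c d \<in> V d"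
    and neg: "\<And>t w i. \<forall>d\<in>{1..M}. t d \<in> U d \<and> w d \<in> V d \<Longrightarrow> i \<in> {1..M} \<Longrightarrow>
      (\<Sum>d = 1..M. w d * f (t d) (x i)) < 0"
    by (rule weighted_sums_neg_near[where I = "{1..M}" and K = "{1..M}" and g = "\<lambda>d s i. f s (x i)"
          and t = th0 and c = c])
      (use isCont_of_continuous_on_open_Times[OF Theta_open f_cont] th0 c in auto)
  show thesis
  proof (rule that[of "\<lambda>d. U d \<inter> Theta" V])
    show "open (U d \<inter> Theta) \<and> U d \<inter> Theta \<noteq> {} \<and> U d \<inter> Theta \<subseteq> Theta \<and> open (V d) \<and> V d \<noteq> {}"
      if "d \<in> {1..M}" for d
      using UV[OF that] th0 that Theta_open by auto
    show "(\<Sum>d = 1..M. w d * f (t d) (x i)) < 0"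
      if "\<forall>d\<in>{1..M}. t d \<in> U d \<inter> Theta \<and> w d \<in> V d" and "i \<in> {1..M}" for t w i
      using that by (intro neg) auto
  qed
qed

lemma emeasure_lborel_open_pos:
  fixes U :: "'a::euclidean_space set"
  assumes "open U" and "U \<noteq> {}"
  shows "0 < emeasure lborel U"
proof -
  obtain u e where "e > 0" "ball u e \<subseteq> U"
    using assms by (meson ex_in_conv openE)
  then have "emeasure lborel (ball u e) \<le> emeasure lborel U"
    using assms by (intro emeasure_mono) auto
  moreover have "0 < emeasure lborel (ball u e)"
    using \<open>e > 0\<close> by (simp add: emeasure_ball)
  ultimately show ?thesis by order
qed

lemma emeasure_PiM_lborel_PiE_open_pos:
  fixes U :: "'i \<Rightarrow> 'a::euclidean_space set"
  assumes "finite I" and "\<And>i. i \<in> I \<Longrightarrow> open (U i) \<and> U i \<noteq> {}"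
  shows "0 < emeasure (PiM I (\<lambda>_. lborel)) (PiE I U)"
proof -
  interpret product_sigma_finite "\<lambda>_. lborel :: 'a measure" by standard
  have "emeasure (PiM I (\<lambda>_. lborel)) (PiE I U) = (\<Prod>i\<in>I. emeasure lborel (U i))"
    using assms by (subst emeasure_PiM) auto
  also have "\<dots> > 0"
    using assms emeasure_lborel_open_pos by (auto simp: zero_less_iff_neq_zero prod_zero_iff)
  finally show ?thesis .
qed

lemma emeasure_pair_measure_Times_pos:
  assumes "sigma_finite_measure M2" and "A \<in> sets M1" and "B \<in> sets M2"
    and "0 < emeasure M1 A" and "0 < emeasure M2 B"
  shows "0 < emeasure (M1 \<Otimes>\<^sub>M M2) (A \<times> B)"
proof -
  interpret sigma_finite_measure M2 by fact
  show ?thesis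
    using assms by (simp add: emeasure_pair_measure_Times ennreal_zero_less_mult_iff)
qed

lemma emeasure_density_pos:
  fixes p :: "'a \<Rightarrow> real"
  assumes "A \<in> sets M" and "0 < emeasure M A"
    and "p \<in> borel_measurable M" and "\<And>q. q \<in> A \<Longrightarrow> p q > 0"
  shows "0 < emeasure (density M (\<lambda>q. ennreal (p q))) A"
proof (rule ccontr)
  assume "\<not> ?thesis"
  then have "A \<in> null_sets (density M (\<lambda>q. ennreal (p q)))"
    using assms(1) by (simp add: null_sets_def)
  then have "AE q in M. q \<in> A \<longrightarrow> ennreal (p q) = 0"
    using assms(3) by (simp add: null_sets_density_iff)
  then have "AE q in M. q \<notin> A"
    by (rule AE_mp) (use assms(4) in \<open>force intro!: AE_I2 simp: ennreal_eq_0_iff\<close>)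
  then have "A \<in> null_sets M"
    using AE_iff_null_sets assms(1) by blast
  with assms(2) show False by (simp add: null_sets_def)
qed

lemma finite_deep_weight_index: "finite (deep_weight_index M N L r y)"
proof -
  have "deep_weight_index M N L r y \<subseteq> {0..L} \<times> {1..max 1 N} \<times> ({1..r 0} \<union> (\<Union>l\<in>{1..L-1}. {1..r l}) \<union> {y}) \<times>
      ({1..M} \<union> (\<Union>l\<in>{1..L-1}. {1..r (l - 1)}) \<union> {1..r (L - 1)})"
    unfolding deep_weight_index_def by (auto dest: order.trans[OF _ div_le_dividend])
  then show ?thesis by (rule finite_subset) auto
qed

lemma deep_u_eq_0_if_first_layer_nonpos:
  assumes dead: "\<And>j g. j \<in> {1..N} \<Longrightarrow> g \<in> {1..r 0} \<Longrightarrow> (\<Sum>d = 1..M. a (0, j, g, d) * f (th d) (X j)) \<le> 0"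
  shows "j \<ge> 1 \<Longrightarrow> j * 2 ^ l \<le> N \<Longrightarrow> g \<in> {1..r l} \<Longrightarrow> deep_u f M r th a X l j g = 0"
proof (induction l arbitrary: j g)
  case 0
  then show ?case using dead[of j g] by (simp add: relu_def)
next
  case (Suc l)
  have "(2 * j - 1) * 2 ^ l \<le> N" "2 * j * 2 ^ l \<le> N"
    using Suc.prems(2) by (simp_all add: algebra_simps)
  then have "deep_u f M r th a X l (2 * j - 1) al = 0 \<and> deep_u f M r th a X l (2 * j) al = 0"
    if "al \<in> {1..r l}" for al
    using Suc.IH that Suc.prems(1) by auto
  then show ?case by (simp add: relu_def)
qed

lemma deep_score_eq_0_if_first_layer_nonpos:
  assumes "\<And>j g. j \<in> {1..N} \<Longrightarrow> g \<in> {1..r 0} \<Longrightarrow> (\<Sum>d = 1..M. a (0, j, g, d) * f (th d) (X j)) \<le> 0"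
    and "L \<ge> 1" and "N = 2 ^ L"
  shows "deep_score f M L r y th a X = 0"
proof -
  have N: "2 * 2 ^ (L - 1) = N"
    using \<open>L \<ge> 1\<close> \<open>N = 2 ^ L\<close> by (cases L) auto
  have "deep_u f M r th a X (L - 1) j al = 0" if "j \<in> {1, 2}" "al \<in> {1..r (L - 1)}" for j al
    using that
    by (intro deep_u_eq_0_if_first_layer_nonpos[where X = X and f = f and th = th and a = a
          and M = M and N = N and r = r, OF assms(1)])
      (auto simp flip: N)
  then show ?thesis
    unfolding deep_score_def by simp
qed

lemma grid_tensor_shallow1_eq_deep_if_first_layer_nonpos:
  assumes "\<And>j g i. j \<in> {1..N} \<Longrightarrow> g \<in> {1..r 0} \<Longrightarrow> i \<in> {1..M} \<Longrightarrow>
      (\<Sum>d = 1..M. a (0, j, g, d) * f (th d) (x i)) \<le> 0"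
    and "L \<ge> 1" and "N = 2 ^ L"
  shows "grid_tensor x M N (shallow1_score f M N th 0 c) = grid_tensor x M N (deep_score f M L r y th a)"
  unfolding grid_tensor_def
proof (rule restrict_ext)
  fix dd assume "dd \<in> PiE {1..N} (\<lambda>_. {1..M})"
  then have "deep_score f M L r y th a (\<lambda>i. x (dd i)) = 0"
    using assms by (intro deep_score_eq_0_if_first_layer_nonpos) (auto simp: PiE_iff)
  then show "shallow1_score f M N th 0 c (\<lambda>i. x (dd i)) = deep_score f M L r y th a (\<lambda>i. x (dd i))"
    by (simp add: shallow1_score_def)
qed

lemma open_box_in_sets_deep_param_measure:
  assumes "finite W" and "\<And>d. d \<in> {1..M} \<Longrightarrow> open (U d)" and "\<And>w. w \<in> W \<Longrightarrow> open (V w)"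
  shows "PiE {1..M} U \<times> PiE W V \<in> sets (deep_param_measure M W)"
  using assms unfolding deep_param_measure_def by (auto intro!: sets_PiM_I_finite)

lemma emeasure_deep_param_measure_open_box_pos:
  assumes "finite W" and "\<And>d. d \<in> {1..M} \<Longrightarrow> open (U d) \<and> U d \<noteq> {}"
    and "\<And>w. w \<in> W \<Longrightarrow> open (V w) \<and> V w \<noteq> {}"
  shows "0 < emeasure (deep_param_measure M W) (PiE {1..M} U \<times> PiE W V)"
proof -
  interpret product_sigma_finite "\<lambda>_. lborel :: real measure" by standard
  show ?thesis
    unfolding deep_param_measure_def using assms
    by (intro emeasure_pair_measure_Times_pos emeasure_PiM_lborel_PiE_open_pos sigma_finite
        sets_PiM_I_finite) auto
qed

definition first_layer_box ::
  "nat \<Rightarrow> (nat \<times> nat \<times> nat \<times> nat) set \<Rightarrow> (nat \<Rightarrow> 'p set) \<Rightarrow> (nat \<Rightarrow> real set) \<Rightarrow>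
   ((nat \<Rightarrow> 'p) \<times> (nat \<times> nat \<times> nat \<times> nat \<Rightarrow> real)) set" where
  "first_layer_box M W U V =
     PiE {1..M} U \<times> PiE W (\<lambda>(l, j, g, d). if l = 0 then V d else UNIV)"

lemma first_layer_box_mem:
  assumes "(th, a) \<in> first_layer_box M W U V" and "d \<in> {1..M}" and "(0, j, g, d) \<in> W"
  shows "th d \<in> U d" and "a (0, j, g, d) \<in> V d"
  using assms by (auto simp: first_layer_box_def PiE_iff)

lemma first_layer_box_in_sets:
  assumes "finite W" and "\<And>d. d \<in> {1..M} \<Longrightarrow> open (U d) \<and> open (V d)"
    and "\<And>j g d. (0, j, g, d) \<in> W \<Longrightarrow> d \<in> {1..M}"
  shows "first_layer_box M W U V \<in> sets (deep_param_measure M W)"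
  unfolding first_layer_box_def using assms
  by (intro open_box_in_sets_deep_param_measure) (auto split: prod.split)

lemma emeasure_first_layer_box_pos:
  assumes "finite W" and "\<And>d. d \<in> {1..M} \<Longrightarrow> open (U d) \<and> U d \<noteq> {} \<and> open (V d) \<and> V d \<noteq> {}"
    and "\<And>j g d. (0, j, g, d) \<in> W \<Longrightarrow> d \<in> {1..M}"
  shows "0 < emeasure (deep_param_measure M W) (first_layer_box M W U V)"
  unfolding first_layer_box_def using assms
  by (intro emeasure_deep_param_measure_open_box_pos) (auto split: prod.split)

theorem claim10:
  fixes f :: "'p::euclidean_space \<Rightarrow> real^'s \<Rightarrow> real"
    and Theta :: "'p set"
    and L N M y :: nat and r :: "nat \<Rightarrow> nat"
    and x :: "nat \<Rightarrow> real^'s"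
    and p :: "(nat \<Rightarrow> 'p) \<times> (nat \<times> nat \<times> nat \<times> nat \<Rightarrow> real) \<Rightarrow> real"
  defines "W \<equiv> deep_weight_index M N L r y"
  defines "D \<equiv> (PiE {1..M} (\<lambda>_. Theta)) \<times> (PiE W (\<lambda>_. UNIV))"
  assumes Theta_open: "open Theta"
    and f_cont: "continuous_on (Theta \<times> UNIV) (\<lambda>(th, v). f th v)"
    and f_nondeg: "nondegenerate_family f Theta"
    and L_pos: "L \<ge> 1" and N_def: "N = 2 ^ L"
    and r_pos: "\<forall>l < L. r l \<ge> 1"
    and x_distinct: "inj_on x {1..M}"
    and p_meas: "p \<in> borel_measurable (deep_param_measure M W)"
    and p_cont: "continuous_on D p"
    and p_pos: "\<forall>q\<in>D. p q > 0"
    and p_zero: "\<forall>q. q \<notin> D \<longrightarrow> p q = 0"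
    and p_prob: "prob_space (density (deep_param_measure M W) (\<lambda>q. ennreal (p q)))"
  shows "\<exists>A \<in> sets (deep_param_measure M W).
           A \<subseteq> {(th, a) \<in> D. \<exists>th' b c. (\<forall>d\<in>{1..M}. th' d \<in> Theta) \<and>
                 grid_tensor x M N (shallow1_score f M N th' b c)
                   = grid_tensor x M N (deep_score f M L r y th a)}
         \<and> emeasure (density (deep_param_measure M W) (\<lambda>q. ennreal (p q))) A > 0"
proof -
  have finW: "finite W"
    unfolding W_def by (rule finite_deep_weight_index)
  have first_layer_W: "(0, j, g, d) \<in> W \<longleftrightarrow> j \<in> {1..N} \<and> g \<in> {1..r 0} \<and> d \<in> {1..M}" for j g d
    unfolding W_def deep_weight_index_def using L_pos by auto
  obtain U V where UV: "\<And>d. d \<in> {1..M} \<Longrightarrow> open (U d) \<and> U d \<noteq> {} \<and> U d \<subseteq> Theta \<and> open (V d) \<and> V d \<noteq> {}"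
    and neg: "\<And>t w i. \<forall>d\<in>{1..M}. t d \<in> U d \<and> w d \<in> V d \<Longrightarrow> i \<in> {1..M} \<Longrightarrow>
      (\<Sum>d = 1..M. w d * f (t d) (x i)) < 0"
    using nondegenerate_family_negative_preactivation_boxes[OF Theta_open f_cont f_nondeg x_distinct]
    by blast
  define A where "A = first_layer_box M W U V"
  have A_sets: "A \<in> sets (deep_param_measure M W)"
    unfolding A_def using finW UV first_layer_W by (intro first_layer_box_in_sets) auto
  have "0 < emeasure (deep_param_measure M W) A"
    unfolding A_def using finW UV first_layer_W by (intro emeasure_first_layer_box_pos) auto
  moreover have "A \<subseteq> D"
    unfolding A_def first_layer_box_def D_def using UV by (intro Sigma_mono PiE_mono) auto
  moreover have "grid_tensor x M N (shallow1_score f M N th 0 c) = grid_tensor x M N (deep_score f M L r y th a)"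
    if "(th, a) \<in> A" for th a c
  proof (rule grid_tensor_shallow1_eq_deep_if_first_layer_nonpos[OF _ L_pos N_def])
    fix j g i assume "j \<in> {1..N}" "g \<in> {1..r 0}" "i \<in> {1..M}"
    with that show "(\<Sum>d = 1..M. a (0, j, g, d) * f (th d) (x i)) \<le> 0"
      unfolding A_def by (intro less_imp_le neg) (auto simp: first_layer_W dest: first_layer_box_mem)
  qed
  moreover have "\<forall>d\<in>{1..M}. th d \<in> Theta" if "(th, a) \<in> A" for th a
    using that \<open>A \<subseteq> D\<close> unfolding D_def by (auto simp: PiE_iff)
  ultimately show ?thesis
    using A_sets p_meas p_pos by (intro bexI[of _ A] conjI emeasure_density_pos) blast+
qed

end
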